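(* Let $R$ be a Noetherian ring, $I\subseteq R$ an ideal, and $J_1=(f_1,\ldots,f_m)\subseteq I$, $J_2=(g_1,\ldots,g_m)\subseteq I$ ideals with $f_i-g_i\in I^2$ for $i=1,\ldots,m$. Assume the pair $J_1\subseteq I$ is Aluffi torsion-free. Let $\mathcal Z_1=\{(a_1,\ldots,a_m)\in R^m:\sum a_if_i=0\}$ and $\mathcal Z_2=\{(a_1,\ldots,a_m)\in R^m:\sum a_ig_i=0\}$. Then $J_2\subseteq I$ is Aluffi torsion-free if and only if $\mathcal Z_1\cap I^nR^m\subseteq \mathcal Z_2+I^{n+1}R^m$ for all $n\ge0$.
   Context: A pair of ideals $J\subseteq I$ in a ring $R$ is called Aluffi torsion-free if $J\cap I^n=JI^{n-1}$ for all $n\ge1$ (with $I^0=R$). *)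

theory Defs
  imports "HOL-Algebra.Algebra"
begin

fun ideal_power :: "('a, 'b) ring_scheme \<Rightarrow> 'a set \<Rightarrow> nat \<Rightarrow> 'a set" where
  "ideal_power R I 0 = carrier R"
| "ideal_power R I (Suc n) = ideal_prod R I (ideal_power R I n)"

definition aluffi_torsion_free :: "('a, 'b) ring_scheme \<Rightarrow> 'a set \<Rightarrow> 'a set \<Rightarrow> bool" where
  "aluffi_torsion_free R J I \<longleftrightarrow>
     (\<forall>n\<ge>1. J \<inter> ideal_power R I n = ideal_prod R J (ideal_power R I (n - 1)))"

text \<open>Elements of R^m, represented as functions nat \<Rightarrow> 'a vanishing (= zero) from index m on.\<close>
definition vecs :: "('a, 'b) ring_scheme \<Rightarrow> nat \<Rightarrow> (nat \<Rightarrow> 'a) set" where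
  "vecs R m = {a. (\<forall>i<m. a i \<in> carrier R) \<and> (\<forall>i\<ge>m. a i = \<zero>\<^bsub>R\<^esub>)}"

definition syz :: "('a, 'b) ring_scheme \<Rightarrow> nat \<Rightarrow> (nat \<Rightarrow> 'a) \<Rightarrow> (nat \<Rightarrow> 'a) set" where
  "syz R m f = {a \<in> vecs R m. finsum R (\<lambda>i. a i \<otimes>\<^bsub>R\<^esub> f i) {..<m} = \<zero>\<^bsub>R\<^esub>}"

definition ideal_vecs :: "('a, 'b) ring_scheme \<Rightarrow> nat \<Rightarrow> 'a set \<Rightarrow> (nat \<Rightarrow> 'a) set" where
  "ideal_vecs R m K = {a \<in> vecs R m. \<forall>i<m. a i \<in> K}"

definition vecs_sum :: "('a, 'b) ring_scheme \<Rightarrow> nat \<Rightarrow> (nat \<Rightarrow> 'a) set \<Rightarrow> (nat \<Rightarrow> 'a) set \<Rightarrow> (nat \<Rightarrow> 'a) set" where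
  "vecs_sum R m A B = {(\<lambda>i. if i < m then a i \<oplus>\<^bsub>R\<^esub> b i else \<zero>\<^bsub>R\<^esub>) | a b. a \<in> A \<and> b \<in> B}"

end

theory Submission
  imports Defs
begin

text \<open>Elements of \<open>J\<^sub>1 I\<^sup>k\<close> and \<open>J\<^sub>2 I\<^sup>k\<close> are the combinations \<open>\<Sum> b\<^sub>i f\<^sub>i\<close>, \<open>\<Sum> b\<^sub>i g\<^sub>i\<close> with
  coefficients \<open>b\<^sub>i \<in> I\<^sup>k\<close>, so \<open>J \<subseteq> I\<close> is Aluffi torsion-free iff a combination lying in
  \<open>I\<^sup>k\<^sup>+\<^sup>1\<close> can be rewritten with coefficients in \<open>I\<^sup>k\<close>. Since \<open>f\<^sub>i \<equiv> g\<^sub>i\<close> modulo \<open>I\<^sup>2\<close>,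
  \<open>\<Sum> b\<^sub>i f\<^sub>i\<close> and \<open>\<Sum> b\<^sub>i g\<^sub>i\<close> agree modulo \<open>I\<^sup>k\<^sup>+\<^sup>2\<close> whenever all \<open>b\<^sub>i \<in> I\<^sup>k\<close>.

  If \<open>J\<^sub>2\<close> is torsion-free and \<open>a\<close> is a syzygy of the \<open>f\<^sub>i\<close> with entries in \<open>I\<^sup>n\<close>, then
  \<open>\<Sum> a\<^sub>i g\<^sub>i \<in> I\<^sup>n\<^sup>+\<^sup>2\<close> equals some \<open>\<Sum> c\<^sub>i g\<^sub>i\<close> with \<open>c\<^sub>i \<in> I\<^sup>n\<^sup>+\<^sup>1\<close>, and \<open>a - c\<close> is a syzygy of
  the \<open>g\<^sub>i\<close>. Conversely, given \<open>x = \<Sum> b\<^sub>i g\<^sub>i \<in> I\<^sup>n\<^sup>+\<^sup>1\<close> with \<open>b\<^sub>i \<in> I\<^sup>k\<close>, \<open>k < n\<close>, torsion-freeness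
  of \<open>J\<^sub>1\<close> writes \<open>\<Sum> b\<^sub>i f\<^sub>i \<in> I\<^sup>k\<^sup>+\<^sup>2\<close> as \<open>\<Sum> d\<^sub>i f\<^sub>i\<close> with \<open>d\<^sub>i \<in> I\<^sup>k\<^sup>+\<^sup>1\<close>; the syzygy \<open>b - d\<close> of the
  \<open>f\<^sub>i\<close> is, by hypothesis, a syzygy of the \<open>g\<^sub>i\<close> plus a vector \<open>c\<close> in \<open>I\<^sup>k\<^sup>+\<^sup>1\<close>, so that
  \<open>x = \<Sum> (c\<^sub>i + d\<^sub>i) g\<^sub>i\<close>. Iterating raises the coefficients of \<open>x\<close> into \<open>I\<^sup>n\<close>.\<close>

context ring
begin

lemma ideal_zero_closed: "ideal L R \<Longrightarrow> \<zero> \<in> L"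
  by (simp add: additive_subgroup.zero_closed ideal.axioms(1))

lemma ideal_add_closed: "ideal L R \<Longrightarrow> x \<in> L \<Longrightarrow> y \<in> L \<Longrightarrow> x \<oplus> y \<in> L"
  by (simp add: additive_subgroup.a_closed ideal.axioms(1))

lemma ideal_minus_closed: "ideal L R \<Longrightarrow> x \<in> L \<Longrightarrow> y \<in> L \<Longrightarrow> x \<ominus> y \<in> L"
  by (simp add: a_minus_def additive_subgroup.a_closed additive_subgroup.a_inv_closed ideal.axioms(1))

lemma ideal_minus_mem_iff:
  assumes "ideal L R" and "x \<in> carrier R" and "y \<in> carrier R" and "x \<ominus> y \<in> L"
  shows "x \<in> L \<longleftrightarrow> y \<in> L"
proof -
  interpret additive_subgroup L R using ideal.axioms(1)[OF assms(1)] .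
  have "y = x \<ominus> (x \<ominus> y)" and "x = (x \<ominus> y) \<oplus> y"
    using assms(2,3) by algebra+
  then show ?thesis
    using assms(4) a_closed a_inv_closed unfolding a_minus_def by metis
qed

lemma ideal_finsum_closed:
  assumes "ideal L R" and "\<And>i. i \<in> A \<Longrightarrow> h i \<in> L"
  shows "finsum R h A \<in> L"
proof (cases "finite A")
  case True
  then show ?thesis using assms(2)
  proof (induction A rule: finite_induct)
    case (insert x A)
    then have "h \<in> A \<rightarrow> carrier R" "h x \<in> carrier R"
      using ideal.Icarr[OF assms(1)] by auto
    with insert show ?case
      by (simp add: finsum_insert ideal_add_closed[OF assms(1)])
  qed (simp add: ideal_zero_closed[OF assms(1)])
qed (simp add: finsum_infinite ideal_zero_closed[OF assms(1)])

lemma ideal_power_ideal: "ideal I R \<Longrightarrow> ideal (ideal_power R I n) R"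
  by (induction n) (auto simp: oneideal ideal_prod_is_ideal)

lemma ideal_power_Suc_subset:
  "ideal I R \<Longrightarrow> ideal_power R I (Suc n) \<subseteq> ideal_power R I n"
  using ideal_prod_inter[OF _ ideal_power_ideal] by auto

lemma ideal_power_antimono:
  assumes "ideal I R" and "n \<le> k"
  shows "ideal_power R I k \<subseteq> ideal_power R I n"
  using assms(2)
proof (induction k)
  case (Suc k)
  then show ?case
    using ideal_power_Suc_subset[OF assms(1), of k] by (cases "n = Suc k") auto
qed simp

end

lemma (in cring) ideal_power_add:
  assumes "ideal I R"
  shows "ideal_power R I (a + b) = ideal_power R I a \<cdot> ideal_power R I b"
proof (induction a)
  case 0
  have "ideal_power R I b = ideal_power R I b \<cdot> carrier R"
    using ideal_prod_one[OF ideal_power_ideal[OF assms]] by simp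
  also have "\<dots> = carrier R \<cdot> ideal_power R I b"
    using ideal_prod_commute[OF ideal_power_ideal[OF assms] oneideal] .
  finally show ?case by simp
next
  case (Suc a)
  then show ?case
    using ideal_prod_assoc[OF assms ideal_power_ideal[OF assms] ideal_power_ideal[OF assms]]
    by simp
qed

lemma (in cring) ideal_power_mult:
  assumes "ideal I R" and "x \<in> ideal_power R I a" and "y \<in> ideal_power R I b"
  shows "x \<otimes> y \<in> ideal_power R I (a + b)"
  using assms by (simp add: ideal_power_add ideal_prod.prod)

definition lin_comb :: "('a, 'b) ring_scheme \<Rightarrow> nat \<Rightarrow> (nat \<Rightarrow> 'a) \<Rightarrow> (nat \<Rightarrow> 'a) \<Rightarrow> 'a" where
  "lin_comb R m b F = finsum R (\<lambda>i. b i \<otimes>\<^bsub>R\<^esub> F i) {..<m}"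

definition lin_combs :: "('a, 'b) ring_scheme \<Rightarrow> nat \<Rightarrow> (nat \<Rightarrow> 'a) \<Rightarrow> 'a set \<Rightarrow> 'a set" where
  "lin_combs R m F K = {lin_comb R m b F | b. \<forall>i<m. b i \<in> K}"

lemma lin_combsI: "(\<And>i. i < m \<Longrightarrow> b i \<in> K) \<Longrightarrow> lin_comb R m b F \<in> lin_combs R m F K"
  unfolding lin_combs_def by blast

lemma lin_combsE:
  assumes "x \<in> lin_combs R m F K"
  obtains b where "\<And>i. i < m \<Longrightarrow> b i \<in> K" and "x = lin_comb R m b F"
  using assms unfolding lin_combs_def by blast

context cring
begin

lemma lin_comb_closed:
  assumes "F ` {..<m} \<subseteq> carrier R" and "\<And>i. i < m \<Longrightarrow> b i \<in> carrier R"
  shows "lin_comb R m b F \<in> carrier R"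
  unfolding lin_comb_def using assms by (intro finsum_closed) auto

lemma lin_comb_cong:
  assumes "F ` {..<m} \<subseteq> carrier R" and "\<And>i. i < m \<Longrightarrow> c i \<in> carrier R"
    and "\<And>i. i < m \<Longrightarrow> b i = c i"
  shows "lin_comb R m b F = lin_comb R m c F"
  unfolding lin_comb_def by (rule finsum_cong') (use assms in auto)

lemma lin_comb_add_coeffs:
  assumes "F ` {..<m} \<subseteq> carrier R"
    and "\<And>i. i < m \<Longrightarrow> b i \<in> carrier R" and "\<And>i. i < m \<Longrightarrow> c i \<in> carrier R"
  shows "lin_comb R m (\<lambda>i. b i \<oplus> c i) F = lin_comb R m b F \<oplus> lin_comb R m c F"
proof -
  have "lin_comb R m (\<lambda>i. b i \<oplus> c i) F = (\<Oplus>i\<in>{..<m}. b i \<otimes> F i \<oplus> c i \<otimes> F i)"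
    unfolding lin_comb_def by (rule finsum_cong') (use assms in \<open>auto simp: l_distr\<close>)
  also have "\<dots> = lin_comb R m b F \<oplus> lin_comb R m c F"
    unfolding lin_comb_def by (rule finsum_addf) (use assms in auto)
  finally show ?thesis .
qed

lemma lin_comb_minus_coeffs:
  assumes "F ` {..<m} \<subseteq> carrier R"
    and "\<And>i. i < m \<Longrightarrow> b i \<in> carrier R" and "\<And>i. i < m \<Longrightarrow> c i \<in> carrier R"
  shows "lin_comb R m (\<lambda>i. b i \<ominus> c i) F = lin_comb R m b F \<ominus> lin_comb R m c F"
proof -
  have "lin_comb R m b F = lin_comb R m (\<lambda>i. (b i \<ominus> c i) \<oplus> c i) F"
    by (rule lin_comb_cong) (use assms in \<open>auto simp: a_minus_def a_assoc l_neg\<close>)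
  also have "\<dots> = lin_comb R m (\<lambda>i. b i \<ominus> c i) F \<oplus> lin_comb R m c F"
    by (rule lin_comb_add_coeffs) (use assms in auto)
  finally show ?thesis
    using lin_comb_closed[of F m "\<lambda>i. b i \<ominus> c i"] lin_comb_closed[of F m c] assms
    by (simp add: a_minus_def a_assoc r_neg)
qed

lemma lin_comb_minus_gens:
  assumes "F ` {..<m} \<subseteq> carrier R" and "G ` {..<m} \<subseteq> carrier R"
    and "\<And>i. i < m \<Longrightarrow> b i \<in> carrier R"
  shows "lin_comb R m b F \<ominus> lin_comb R m b G = lin_comb R m b (\<lambda>i. F i \<ominus> G i)"
proof -
  have "lin_comb R m b F = (\<Oplus>i\<in>{..<m}. b i \<otimes> (F i \<ominus> G i) \<oplus> b i \<otimes> G i)"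
    unfolding lin_comb_def
  proof (rule finsum_cong')
    fix i assume "i \<in> {..<m}"
    then have "F i \<in> carrier R" "G i \<in> carrier R" "b i \<in> carrier R" using assms by auto
    then show "b i \<otimes> F i = b i \<otimes> (F i \<ominus> G i) \<oplus> b i \<otimes> G i" by algebra
  qed (use assms in \<open>auto simp: image_subset_iff\<close>)
  also have "\<dots> = lin_comb R m b (\<lambda>i. F i \<ominus> G i) \<oplus> lin_comb R m b G"
    unfolding lin_comb_def by (rule finsum_addf) (use assms in \<open>auto simp: image_subset_iff\<close>)
  finally have "lin_comb R m b F = lin_comb R m b (\<lambda>i. F i \<ominus> G i) \<oplus> lin_comb R m b G" .
  moreover have "lin_comb R m b (\<lambda>i. F i \<ominus> G i) \<in> carrier R"
    by (rule lin_comb_closed) (use assms in \<open>auto simp: image_subset_iff\<close>)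
  ultimately show ?thesis
    using lin_comb_closed[of G m b] assms by (simp add: a_minus_def a_assoc r_neg)
qed

lemma lin_comb_smult:
  assumes "F ` {..<m} \<subseteq> carrier R" and "\<And>i. i < m \<Longrightarrow> b i \<in> carrier R"
    and "x \<in> carrier R"
  shows "x \<otimes> lin_comb R m b F = lin_comb R m (\<lambda>i. x \<otimes> b i) F"
proof -
  have "x \<otimes> lin_comb R m b F = (\<Oplus>i\<in>{..<m}. x \<otimes> (b i \<otimes> F i))"
    unfolding lin_comb_def by (rule finsum_rdistr) (use assms in auto)
  also have "\<dots> = lin_comb R m (\<lambda>i. x \<otimes> b i) F"
    unfolding lin_comb_def by (rule finsum_cong') (use assms in \<open>auto simp: m_assoc\<close>)
  finally show ?thesis .
qed

lemma lin_comb_in_ideal: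
  assumes "ideal L R" and "\<And>i. i < m \<Longrightarrow> b i \<otimes> F i \<in> L"
  shows "lin_comb R m b F \<in> L"
  unfolding lin_comb_def using assms by (intro ideal_finsum_closed) auto

lemma lin_combs_ideal:
  assumes F: "F ` {..<m} \<subseteq> carrier R" and K: "ideal K R"
  shows "ideal (lin_combs R m F K) R"
proof -
  have K_carrier: "\<And>x. x \<in> K \<Longrightarrow> x \<in> carrier R"
    using ideal.Icarr[OF K] .
  have carrier: "lin_combs R m F K \<subseteq> carrier R"
    using F K_carrier by (auto elim!: lin_combsE intro!: lin_comb_closed)
  have scale: "x \<otimes> y \<in> lin_combs R m F K"
    if y: "y \<in> lin_combs R m F K" and x: "x \<in> carrier R" for x y
  proof -
    obtain b where b: "\<And>i. i < m \<Longrightarrow> b i \<in> K" and y: "y = lin_comb R m b F"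
      using y by (rule lin_combsE) blast
    have "x \<otimes> y = lin_comb R m (\<lambda>i. x \<otimes> b i) F"
      unfolding y using F b K_carrier x by (intro lin_comb_smult) auto
    then show ?thesis
      using b x by (auto intro!: lin_combsI ideal.I_l_closed[OF K])
  qed
  have add: "y \<oplus> z \<in> lin_combs R m F K"
    if y_in: "y \<in> lin_combs R m F K" and z_in: "z \<in> lin_combs R m F K" for y z
  proof -
    obtain b where b: "\<And>i. i < m \<Longrightarrow> b i \<in> K" and y: "y = lin_comb R m b F"
      using y_in by (rule lin_combsE) blast
    obtain c where c: "\<And>i. i < m \<Longrightarrow> c i \<in> K" and z: "z = lin_comb R m c F"
      using z_in by (rule lin_combsE) blast
    have "y \<oplus> z = lin_comb R m (\<lambda>i. b i \<oplus> c i) F"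
      unfolding y z using F b c K_carrier by (intro lin_comb_add_coeffs[symmetric]) auto
    then show ?thesis
      using b c by (auto intro!: lin_combsI ideal_add_closed[OF K])
  qed
  have zero: "\<zero> \<in> lin_combs R m F K"
  proof -
    have "\<zero> \<otimes> y \<in> lin_combs R m F K" if "y \<in> lin_combs R m F K" for y
      using scale[OF that] by simp
    moreover have "lin_comb R m (\<lambda>_. \<zero>) F \<in> lin_combs R m F K"
      by (intro lin_combsI ideal_zero_closed[OF K])
    ultimately show ?thesis
      using carrier by (metis l_null subsetD)
  qed
  show ?thesis
  proof (rule idealI[OF ring_axioms])
    show "subgroup (lin_combs R m F K) (add_monoid R)"
    proof
      fix y assume y: "y \<in> lin_combs R m F K"
      then have "\<ominus> \<one> \<otimes> y \<in> lin_combs R m F K" by (intro scale) auto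
      then show "inv\<^bsub>add_monoid R\<^esub> y \<in> lin_combs R m F K"
        using y carrier by (auto simp: a_inv_def[symmetric] l_minus)
    qed (use carrier add zero in auto)
  qed (use scale carrier in \<open>auto simp: m_comm subset_iff\<close>)
qed

lemma genideal_subset_lin_combs:
  assumes F: "F ` {..<m} \<subseteq> carrier R"
  shows "Idl (F ` {..<m}) \<subseteq> lin_combs R m F (carrier R)"
proof (rule genideal_minimal[OF lin_combs_ideal[OF F oneideal]], rule subsetI)
  fix y assume "y \<in> F ` {..<m}"
  then obtain j where j: "j < m" and y: "y = F j" by blast
  have "lin_comb R m (\<lambda>i. if i = j then \<one> else \<zero>) F = (\<Oplus>i\<in>{..<m}. if j = i then F i else \<zero>)"
    unfolding lin_comb_def by (rule finsum_cong') (use F in auto)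
  also have "\<dots> = y"
    unfolding y by (rule finsum_singleton) (use j F in auto)
  moreover have "lin_comb R m (\<lambda>i. if i = j then \<one> else \<zero>) F \<in> lin_combs R m F (carrier R)"
    by (rule lin_combsI) simp
  ultimately show "y \<in> lin_combs R m F (carrier R)" by simp
qed

lemma ideal_prod_genideal_eq_lin_combs:
  assumes F: "F ` {..<m} \<subseteq> carrier R" and K: "ideal K R"
  shows "(Idl (F ` {..<m})) \<cdot> K = lin_combs R m F K"
proof
  show "(Idl (F ` {..<m})) \<cdot> K \<subseteq> lin_combs R m F K"
  proof
    fix s assume "s \<in> (Idl (F ` {..<m})) \<cdot> K"
    then show "s \<in> lin_combs R m F K"
    proof (induction s rule: ideal_prod.induct)
      case (prod x y)
      have "x \<in> lin_combs R m F (carrier R)"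
        using genideal_subset_lin_combs[OF F] prod(1) ..
      then obtain b where b: "\<And>i. i < m \<Longrightarrow> b i \<in> carrier R" and x: "x = lin_comb R m b F"
        by (rule lin_combsE) blast
      have y: "y \<in> carrier R" using ideal.Icarr[OF K prod(2)] .
      have "x \<otimes> y = y \<otimes> x" using lin_comb_closed[OF F b] x y by (simp add: m_comm)
      also have "\<dots> = lin_comb R m (\<lambda>i. y \<otimes> b i) F"
        unfolding x using F b y by (rule lin_comb_smult)
      finally show ?case
        using b prod(2) by (auto intro!: lin_combsI ideal.I_r_closed[OF K])
    next
      case (sum s1 s2)
      show ?case by (rule ideal_add_closed[OF lin_combs_ideal[OF F K] sum.IH])
    qed
  qed
  show "lin_combs R m F K \<subseteq> (Idl (F ` {..<m})) \<cdot> K"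
  proof
    fix x assume "x \<in> lin_combs R m F K"
    then obtain b where b: "\<And>i. i < m \<Longrightarrow> b i \<in> K" and x: "x = lin_comb R m b F"
      by (rule lin_combsE) blast
    have "b i \<otimes> F i \<in> (Idl (F ` {..<m})) \<cdot> K" if i: "i < m" for i
    proof -
      have "F i \<in> Idl (F ` {..<m})" using genideal_self[OF F] i by auto
      then have "F i \<otimes> b i \<in> (Idl (F ` {..<m})) \<cdot> K" using b[OF i] by (rule ideal_prod.prod)
      moreover have "F i \<in> carrier R" using F i by auto
      ultimately show ?thesis using ideal.Icarr[OF K b[OF i]] by (simp add: m_comm)
    qed
    then show "x \<in> (Idl (F ` {..<m})) \<cdot> K"
      unfolding x by (intro lin_comb_in_ideal ideal_prod_is_ideal genideal_ideal F K)
  qed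
qed

lemma genideal_eq_lin_combs:
  assumes "F ` {..<m} \<subseteq> carrier R"
  shows "Idl (F ` {..<m}) = lin_combs R m F (carrier R)"
  using ideal_prod_genideal_eq_lin_combs[OF assms oneideal]
    ideal_prod_one[OF genideal_ideal[OF assms]] by simp

lemma lin_combs_ideal_power_subset:
  assumes I: "ideal I R" and F: "F ` {..<m} \<subseteq> I"
  shows "lin_combs R m F (ideal_power R I n) \<subseteq> lin_combs R m F (carrier R) \<inter> ideal_power R I (Suc n)"
proof
  fix x assume "x \<in> lin_combs R m F (ideal_power R I n)"
  then obtain b where b: "\<And>i. i < m \<Longrightarrow> b i \<in> ideal_power R I n" and x: "x = lin_comb R m b F"
    by (rule lin_combsE) blast
  have "b i \<otimes> F i \<in> ideal_power R I (Suc n)" if i: "i < m" for i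
  proof -
    have "F i \<otimes> b i \<in> ideal_power R I (Suc n)"
      using F i b[OF i] by (auto intro: ideal_prod.prod)
    then show ?thesis
      using F i ideal.Icarr[OF I] ideal.Icarr[OF ideal_power_ideal[OF I] b[OF i]]
      by (auto simp: m_comm)
  qed
  then have "x \<in> ideal_power R I (Suc n)"
    unfolding x by (intro lin_comb_in_ideal ideal_power_ideal[OF I])
  moreover have "x \<in> lin_combs R m F (carrier R)"
    unfolding x using b ideal.Icarr[OF ideal_power_ideal[OF I]] by (blast intro: lin_combsI)
  ultimately show "x \<in> lin_combs R m F (carrier R) \<inter> ideal_power R I (Suc n)" by blast
qed

lemma all_Suc_shift: "(\<forall>n\<ge>1. P n (n - 1)) \<longleftrightarrow> (\<forall>n. P (Suc n) n)"
proof
  assume "\<forall>n\<ge>1. P n (n - 1)"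
  then show "\<forall>n. P (Suc n) n" by auto
next
  assume P: "\<forall>n. P (Suc n) n"
  show "\<forall>n\<ge>1. P n (n - 1)"
  proof (intro allI impI)
    fix n :: nat assume "n \<ge> 1"
    then obtain k where "n = Suc k" by (cases n) auto
    then show "P n (n - 1)" using P by simp
  qed
qed

lemma aluffi_torsion_free_genideal_iff:
  assumes I: "ideal I R" and F: "F ` {..<m} \<subseteq> I"
  shows "aluffi_torsion_free R (Idl (F ` {..<m})) I \<longleftrightarrow>
    (\<forall>n. lin_combs R m F (carrier R) \<inter> ideal_power R I (Suc n) \<subseteq> lin_combs R m F (ideal_power R I n))"
proof -
  have F_carrier: "F ` {..<m} \<subseteq> carrier R" using F ideal.Icarr[OF I] by blast
  have "aluffi_torsion_free R (Idl (F ` {..<m})) I \<longleftrightarrow>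
    (\<forall>n. lin_combs R m F (carrier R) \<inter> ideal_power R I (Suc n) = lin_combs R m F (ideal_power R I n))"
    unfolding aluffi_torsion_free_def genideal_eq_lin_combs[OF F_carrier, symmetric]
      ideal_prod_genideal_eq_lin_combs[OF F_carrier ideal_power_ideal[OF I], symmetric]
    by (rule all_Suc_shift)
  then show ?thesis
    using lin_combs_ideal_power_subset[OF I F] by blast
qed

lemma syz_iff_lin_comb: "a \<in> syz R m F \<longleftrightarrow> a \<in> vecs R m \<and> lin_comb R m a F = \<zero>"
  by (simp add: syz_def lin_comb_def)

lemma restrict_minus_in_syz:
  assumes F: "F ` {..<m} \<subseteq> carrier R"
    and a: "\<And>i. i < m \<Longrightarrow> a i \<in> carrier R" and c: "\<And>i. i < m \<Longrightarrow> c i \<in> carrier R"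
    and eq: "lin_comb R m a F = lin_comb R m c F"
  shows "(\<lambda>i. if i < m then a i \<ominus> c i else \<zero>) \<in> syz R m F"
proof -
  have "lin_comb R m (\<lambda>i. if i < m then a i \<ominus> c i else \<zero>) F = lin_comb R m (\<lambda>i. a i \<ominus> c i) F"
    by (rule lin_comb_cong) (use F a c in auto)
  also have "\<dots> = \<zero>"
    using lin_comb_minus_coeffs[OF F a c] eq lin_comb_closed[OF F c] by simp
  finally show ?thesis
    unfolding syz_iff_lin_comb vecs_def using a c by auto
qed

lemma vecs_sum_ideal_vecsI:
  assumes a: "a \<in> vecs R m" and K: "ideal K R" and c: "\<And>i. i < m \<Longrightarrow> c i \<in> K"
    and diff: "(\<lambda>i. if i < m then a i \<ominus> c i else \<zero>) \<in> A"
  shows "a \<in> vecs_sum R m A (ideal_vecs R m K)"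
proof -
  define z where "z = (\<lambda>i. if i < m then a i \<ominus> c i else \<zero>)"
  define c' where "c' = (\<lambda>i. if i < m then c i else \<zero>)"
  have "c' \<in> ideal_vecs R m K"
    unfolding c'_def ideal_vecs_def vecs_def using c ideal.Icarr[OF K] by auto
  moreover have "a = (\<lambda>i. if i < m then z i \<oplus> c' i else \<zero>)"
  proof
    fix i
    show "a i = (if i < m then z i \<oplus> c' i else \<zero>)"
      using a c ideal.Icarr[OF K, of "c i"] unfolding vecs_def z_def c'_def
      by (auto simp: a_minus_def a_assoc l_neg)
  qed
  ultimately show ?thesis
    unfolding vecs_sum_def using diff[folded z_def] by blast
qed

lemma lin_comb_vecs_sum_syz:
  assumes F: "F ` {..<m} \<subseteq> carrier R" and K: "ideal K R"
    and a: "a \<in> vecs_sum R m (syz R m F) (ideal_vecs R m K)"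
  shows "lin_comb R m a F \<in> lin_combs R m F K"
proof -
  obtain z c where a_eq: "a = (\<lambda>i. if i < m then z i \<oplus> c i else \<zero>)"
    and z: "z \<in> syz R m F" and c: "c \<in> ideal_vecs R m K"
    using a unfolding vecs_sum_def by blast
  have z_carrier: "\<And>i. i < m \<Longrightarrow> z i \<in> carrier R" and c_carrier: "\<And>i. i < m \<Longrightarrow> c i \<in> carrier R"
    using z c unfolding syz_def ideal_vecs_def vecs_def by auto
  have "lin_comb R m a F = lin_comb R m (\<lambda>i. z i \<oplus> c i) F"
    unfolding a_eq by (rule lin_comb_cong) (use F z_carrier c_carrier in auto)
  also have "\<dots> = lin_comb R m c F"
    using lin_comb_add_coeffs[OF F z_carrier c_carrier] z lin_comb_closed[OF F c_carrier]
    by (simp add: syz_iff_lin_comb)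
  finally show ?thesis
    using c unfolding ideal_vecs_def by (auto intro: lin_combsI)
qed

end

locale perturbed_generators = cring +
  fixes I :: "'a set" and m :: nat and f g :: "nat \<Rightarrow> 'a"
  assumes ideal_I: "ideal I R"
    and f_carrier: "f ` {..<m} \<subseteq> carrier R" and g_carrier: "g ` {..<m} \<subseteq> carrier R"
    and f_minus_g: "\<And>i. i < m \<Longrightarrow> f i \<ominus> g i \<in> ideal_power R I 2"
begin

lemma ideal_power_carrier: "x \<in> ideal_power R I n \<Longrightarrow> x \<in> carrier R"
  using ideal.Icarr[OF ideal_power_ideal[OF ideal_I]] .

lemma lin_comb_perturbed_iff:
  assumes b: "\<And>i. i < m \<Longrightarrow> b i \<in> ideal_power R I k"
  shows "lin_comb R m b f \<in> ideal_power R I (Suc (Suc k)) \<longleftrightarrow>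
    lin_comb R m b g \<in> ideal_power R I (Suc (Suc k))"
proof (rule ideal_minus_mem_iff[OF ideal_power_ideal[OF ideal_I]])
  have b_carrier: "\<And>i. i < m \<Longrightarrow> b i \<in> carrier R" using b ideal_power_carrier by blast
  show "lin_comb R m b f \<in> carrier R" "lin_comb R m b g \<in> carrier R"
    using lin_comb_closed f_carrier g_carrier b_carrier by auto
  have "lin_comb R m b f \<ominus> lin_comb R m b g = lin_comb R m b (\<lambda>i. f i \<ominus> g i)"
    using f_carrier g_carrier b_carrier by (rule lin_comb_minus_gens)
  also have "\<dots> \<in> ideal_power R I (k + 2)"
    using b f_minus_g by (intro lin_comb_in_ideal ideal_power_ideal ideal_I ideal_power_mult)
  finally show "lin_comb R m b f \<ominus> lin_comb R m b g \<in> ideal_power R I (Suc (Suc k))"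
    by (simp only: add_2_eq_Suc')
qed

lemma syz_subset_if_torsion_free:
  assumes tf_g: "\<And>n. lin_combs R m g (carrier R) \<inter> ideal_power R I (Suc n)
      \<subseteq> lin_combs R m g (ideal_power R I n)"
  shows "syz R m f \<inter> ideal_vecs R m (ideal_power R I n)
    \<subseteq> vecs_sum R m (syz R m g) (ideal_vecs R m (ideal_power R I (Suc n)))"
proof
  fix a assume "a \<in> syz R m f \<inter> ideal_vecs R m (ideal_power R I n)"
  then have a_vecs: "a \<in> vecs R m" and a_syz: "lin_comb R m a f = \<zero>"
    and a_I: "\<And>i. i < m \<Longrightarrow> a i \<in> ideal_power R I n"
    by (auto simp: syz_iff_lin_comb ideal_vecs_def)
  have a_carrier: "\<And>i. i < m \<Longrightarrow> a i \<in> carrier R"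
    using a_I ideal_power_carrier by blast
  have "lin_comb R m a f \<in> ideal_power R I (Suc (Suc n))"
    unfolding a_syz by (intro ideal_zero_closed ideal_power_ideal ideal_I)
  then have "lin_comb R m a g \<in> ideal_power R I (Suc (Suc n))"
    using lin_comb_perturbed_iff[of a n] a_I by blast
  then have "lin_comb R m a g \<in> lin_combs R m g (ideal_power R I (Suc n))"
    using tf_g[of "Suc n"] a_carrier by (blast intro: lin_combsI)
  then obtain c where c: "\<And>i. i < m \<Longrightarrow> c i \<in> ideal_power R I (Suc n)"
    and eq: "lin_comb R m a g = lin_comb R m c g"
    by (rule lin_combsE) blast
  show "a \<in> vecs_sum R m (syz R m g) (ideal_vecs R m (ideal_power R I (Suc n)))"
    using a_vecs ideal_power_ideal[OF ideal_I] c
      restrict_minus_in_syz[OF g_carrier a_carrier _ eq] ideal_power_carrier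
    by (intro vecs_sum_ideal_vecsI) blast+
qed

lemma lin_comb_raise_coeffs:
  assumes tf_f: "lin_combs R m f (carrier R) \<inter> ideal_power R I (Suc (Suc k))
      \<subseteq> lin_combs R m f (ideal_power R I (Suc k))"
    and lift: "syz R m f \<inter> ideal_vecs R m (ideal_power R I k)
      \<subseteq> vecs_sum R m (syz R m g) (ideal_vecs R m (ideal_power R I (Suc k)))"
    and b: "\<And>i. i < m \<Longrightarrow> b i \<in> ideal_power R I k"
    and mem: "lin_comb R m b g \<in> ideal_power R I (Suc (Suc k))"
  shows "lin_comb R m b g \<in> lin_combs R m g (ideal_power R I (Suc k))"
proof -
  have b_carrier: "\<And>i. i < m \<Longrightarrow> b i \<in> carrier R"
    using b ideal_power_carrier by blast
  have "lin_comb R m b f \<in> ideal_power R I (Suc (Suc k))"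
    using lin_comb_perturbed_iff[of b k] b mem by blast
  then have "lin_comb R m b f \<in> lin_combs R m f (ideal_power R I (Suc k))"
    using tf_f b_carrier by (blast intro: lin_combsI)
  then obtain d where d: "\<And>i. i < m \<Longrightarrow> d i \<in> ideal_power R I (Suc k)"
    and eq_f: "lin_comb R m b f = lin_comb R m d f"
    by (rule lin_combsE) blast
  have d_carrier: "\<And>i. i < m \<Longrightarrow> d i \<in> carrier R"
    using d ideal_power_carrier by blast
  define a where "a = (\<lambda>i. if i < m then b i \<ominus> d i else \<zero>)"
  have a_syz: "a \<in> syz R m f"
    unfolding a_def using f_carrier b_carrier d_carrier eq_f by (rule restrict_minus_in_syz)
  have "b i \<ominus> d i \<in> ideal_power R I k" if "i < m" for i
    using b[OF that] d[OF that] ideal_power_Suc_subset[OF ideal_I]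
    by (blast intro: ideal_minus_closed ideal_power_ideal ideal_I)
  then have "a \<in> ideal_vecs R m (ideal_power R I k)"
    using a_syz unfolding ideal_vecs_def syz_def by (simp add: a_def)
  with a_syz have "lin_comb R m a g \<in> lin_combs R m g (ideal_power R I (Suc k))"
    using lift by (intro lin_comb_vecs_sum_syz g_carrier ideal_power_ideal ideal_I) blast
  then obtain c where c: "\<And>i. i < m \<Longrightarrow> c i \<in> ideal_power R I (Suc k)"
    and eq_g: "lin_comb R m a g = lin_comb R m c g"
    by (rule lin_combsE) blast
  have c_carrier: "\<And>i. i < m \<Longrightarrow> c i \<in> carrier R"
    using c ideal_power_carrier by blast
  have "lin_comb R m c g = lin_comb R m (\<lambda>i. b i \<ominus> d i) g"
    unfolding eq_g[symmetric] a_def by (rule lin_comb_cong) (use g_carrier b_carrier d_carrier in auto)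
  also have "\<dots> = lin_comb R m b g \<ominus> lin_comb R m d g"
    using g_carrier b_carrier d_carrier by (rule lin_comb_minus_coeffs)
  finally have "lin_comb R m b g = lin_comb R m c g \<oplus> lin_comb R m d g"
    using lin_comb_closed[OF g_carrier b_carrier] lin_comb_closed[OF g_carrier d_carrier]
    by (simp add: a_minus_def a_assoc l_neg)
  also have "\<dots> = lin_comb R m (\<lambda>i. c i \<oplus> d i) g"
    using g_carrier c_carrier d_carrier by (rule lin_comb_add_coeffs[symmetric])
  also have "\<dots> \<in> lin_combs R m g (ideal_power R I (Suc k))"
    using c d by (intro lin_combsI ideal_add_closed ideal_power_ideal ideal_I)
  finally show ?thesis .
qed

lemma torsion_free_if_syz_subset:
  assumes tf_f: "\<And>n. lin_combs R m f (carrier R) \<inter> ideal_power R I (Suc n)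
      \<subseteq> lin_combs R m f (ideal_power R I n)"
    and lift: "\<And>n. syz R m f \<inter> ideal_vecs R m (ideal_power R I n)
      \<subseteq> vecs_sum R m (syz R m g) (ideal_vecs R m (ideal_power R I (Suc n)))"
  shows "lin_combs R m g (carrier R) \<inter> ideal_power R I (Suc n) \<subseteq> lin_combs R m g (ideal_power R I n)"
proof
  fix x assume x: "x \<in> lin_combs R m g (carrier R) \<inter> ideal_power R I (Suc n)"
  have "x \<in> lin_combs R m g (ideal_power R I k)" if "k \<le> n" for k
    using that
  proof (induction k)
    case 0
    then show ?case using x by simp
  next
    case (Suc k)
    then have "x \<in> lin_combs R m g (ideal_power R I k)" by simp
    then obtain b where b: "\<And>i. i < m \<Longrightarrow> b i \<in> ideal_power R I k" and x_eq: "x = lin_comb R m b g"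
      by (rule lin_combsE) blast
    have "x \<in> ideal_power R I (Suc (Suc k))"
      using x ideal_power_antimono[OF ideal_I, of "Suc (Suc k)" "Suc n"] Suc.prems by auto
    then show ?case
      unfolding x_eq using lin_comb_raise_coeffs[of k b, OF tf_f lift] b by blast
  qed
  then show "x \<in> lin_combs R m g (ideal_power R I n)" by simp
qed

end

theorem theorem2p7:
  fixes R (structure) and I :: "'a set" and f g :: "nat \<Rightarrow> 'a" and m :: nat
  assumes "cring R" and "noetherian_ring R" and "ideal I R"
    and "f ` {..<m} \<subseteq> carrier R" and "g ` {..<m} \<subseteq> carrier R"
    and "Idl (f ` {..<m}) \<subseteq> I" and "Idl (g ` {..<m}) \<subseteq> I"
    and "\<forall>i<m. f i \<ominus> g i \<in> ideal_power R I 2"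
    and "aluffi_torsion_free R (Idl (f ` {..<m})) I"
  shows "aluffi_torsion_free R (Idl (g ` {..<m})) I \<longleftrightarrow>
    (\<forall>n::nat. syz R m f \<inter> ideal_vecs R m (ideal_power R I n)
       \<subseteq> vecs_sum R m (syz R m g) (ideal_vecs R m (ideal_power R I (Suc n))))"
proof -
  interpret perturbed_generators R I m f g
    using assms(1,3,4,5,8) by (simp add: perturbed_generators_def perturbed_generators_axioms_def)
  have f_I: "f ` {..<m} \<subseteq> I" and g_I: "g ` {..<m} \<subseteq> I"
    using genideal_self[OF assms(4)] genideal_self[OF assms(5)] assms(6,7) by auto
  show ?thesis
    using assms(9) torsion_free_if_syz_subset syz_subset_if_torsion_free
    unfolding aluffi_torsion_free_genideal_iff[OF ideal_I f_I]
      aluffi_torsion_free_genideal_iff[OF ideal_I g_I]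
    by blast
qed

end
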